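(* Let $D$ be a division ring, $R$ a maximal subring of $D$, and $\lambda\in D$. Then $\lambda R\subseteq R\lambda$ if and only if $R\lambda\subseteq \lambda R$ if and only if $\lambda R=R\lambda$.
   Context: All rings are associative unital and subrings share the identity. A maximal subring of a ring $T$ is a proper subring maximal under inclusion among proper subrings of $T$. *)

theory Defs
  imports Main
begin

definition is_subring :: "'a::ring_1 set \<Rightarrow> bool" where
  "is_subring S \<longleftrightarrow> 0 \<in> S \<and> 1 \<in> S \<and>
     (\<forall>x\<in>S. \<forall>y\<in>S. x + y \<in> S \<and> x * y \<in> S) \<and> (\<forall>x\<in>S. - x \<in> S)"

definition maximal_subring :: "'a::ring_1 set \<Rightarrow> bool" where
  "maximal_subring R \<longleftrightarrow> is_subring R \<and> R \<noteq> UNIV \<and>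
     (\<forall>S. is_subring S \<and> S \<noteq> UNIV \<and> R \<subseteq> S \<longrightarrow> S = R)"

end

theory Submission
  imports Defs
begin

text \<open>For \<open>\<lambda> \<noteq> 0\<close> the sets \<open>R\<lambda>\<close> and \<open>\<lambda>R\<close> differ by the inner automorphisms
  \<open>x \<mapsto> \<lambda>\<^sup>-\<^sup>1x\<lambda>\<close> and \<open>x \<mapsto> \<lambda>x\<lambda>\<^sup>-\<^sup>1\<close>: \<open>R\<lambda> = \<lambda>(\<lambda>\<^sup>-\<^sup>1R\<lambda>)\<close> and \<open>\<lambda>R = (\<lambda>R\<lambda>\<^sup>-\<^sup>1)\<lambda>\<close>.
  Since left and right multiplication by \<open>\<lambda>\<close> are injective, \<open>\<lambda>R \<subseteq> R\<lambda>\<close> says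
  \<open>R \<subseteq> \<lambda>\<^sup>-\<^sup>1R\<lambda>\<close>, and \<open>R\<lambda> \<subseteq> \<lambda>R\<close> says \<open>R \<subseteq> \<lambda>R\<lambda>\<^sup>-\<^sup>1\<close>. The image of a maximal
  subring under a ring automorphism is again a proper subring, so by maximality
  neither inclusion can be strict; either one therefore forces \<open>\<lambda>R = R\<lambda>\<close>.\<close>

lemma is_subring_image:
  fixes f :: "'a::ring_1 \<Rightarrow> 'b::ring_1"
  assumes add: "\<And>x y. f (x + y) = f x + f y"
    and mult: "\<And>x y. f (x * y) = f x * f y"
    and one: "f 1 = 1"
    and S: "is_subring S"
  shows "is_subring (f ` S)"
proof -
  have zero: "f 0 = 0"
    using add[of 0 0] by simp
  have uminus: "f (- x) = - f x" for x
    using add[of x "- x"] zero by (metis add.inverse_unique add.right_inverse)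
  show ?thesis
    using S unfolding is_subring_def
    by (auto simp flip: zero one add mult uminus)
qed

lemma maximal_subring_image_eq:
  fixes f :: "'a::ring_1 \<Rightarrow> 'a"
  assumes R: "maximal_subring R"
    and f: "bij f"
    and add: "\<And>x y. f (x + y) = f x + f y"
    and mult: "\<And>x y. f (x * y) = f x * f y"
    and one: "f 1 = 1"
    and le: "R \<subseteq> f ` R"
  shows "f ` R = R"
proof -
  have "is_subring (f ` R)"
    using R by (auto simp: maximal_subring_def intro: is_subring_image[OF add mult one])
  moreover have "f ` R \<noteq> UNIV"
  proof
    assume "f ` R = UNIV"
    then have "f ` R = f ` UNIV"
      using f by (simp add: bij_is_surj)
    then have "R = UNIV"
      using f by (simp add: bij_is_inj inj_image_eq_iff)
    then show False
      using R by (simp add: maximal_subring_def)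
  qed
  ultimately show ?thesis
    using R le by (auto simp: maximal_subring_def)
qed

definition conjugate :: "'a::division_ring \<Rightarrow> 'a \<Rightarrow> 'a" where
  "conjugate c x = c * x * inverse c"

lemma conjugate_add: "conjugate c (x + y) = conjugate c x + conjugate c y"
  by (simp add: conjugate_def algebra_simps)

lemma conjugate_mult:
  "c \<noteq> 0 \<Longrightarrow> conjugate c (x * y) = conjugate c x * conjugate c y"
  unfolding conjugate_def by (metis left_inverse mult.assoc mult_1_left)

lemma conjugate_one: "c \<noteq> 0 \<Longrightarrow> conjugate c 1 = 1"
  by (simp add: conjugate_def)

lemma conjugate_inverse_conjugate:
  "c \<noteq> 0 \<Longrightarrow> conjugate (inverse c) (conjugate c x) = x"
  unfolding conjugate_def
  by (metis left_inverse right_inverse mult.assoc mult_1_left mult_1_right inverse_inverse_eq)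

lemma bij_conjugate: "c \<noteq> 0 \<Longrightarrow> bij (conjugate c)"
  by (rule o_bij[where g = "conjugate (inverse c)"])
     (auto simp: conjugate_inverse_conjugate[of "inverse c", simplified]
                 conjugate_inverse_conjugate)

lemma maximal_subring_conjugate_eq:
  assumes "maximal_subring R" "c \<noteq> 0" "R \<subseteq> conjugate c ` R"
  shows "conjugate c ` R = R"
  using assms
  by (intro maximal_subring_image_eq)
     (simp_all add: bij_conjugate conjugate_add conjugate_mult conjugate_one)

lemma mult_right_eq_mult_left_conjugate:
  "c \<noteq> 0 \<Longrightarrow> x * c = c * conjugate (inverse c) x"
  unfolding conjugate_def by (metis right_inverse mult.assoc mult_1_left inverse_inverse_eq)

lemma mult_left_eq_mult_right_conjugate:
  "c \<noteq> 0 \<Longrightarrow> c * x = conjugate c x * c"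
  by (simp add: conjugate_def mult.assoc)

lemma maximal_subring_mult_left_subset_imp_eq:
  fixes R :: "'a::division_ring set"
  assumes R: "maximal_subring R" and le: "(*) l ` R \<subseteq> (\<lambda>r. r * l) ` R"
  shows "(*) l ` R = (\<lambda>r. r * l) ` R"
proof (cases "l = 0")
  case True
  then show ?thesis by auto
next
  case False
  have right: "(\<lambda>r. r * l) ` R = (*) l ` conjugate (inverse l) ` R"
    using False by (simp add: image_image mult_right_eq_mult_left_conjugate)
  have "inj ((*) l)"
    using False by (simp add: inj_def)
  then have "R \<subseteq> conjugate (inverse l) ` R"
    using le right by (simp add: inj_image_subset_iff)
  then have "conjugate (inverse l) ` R = R"
    using R False by (simp add: maximal_subring_conjugate_eq)
  then show ?thesis
    using right by simp
qed

lemma maximal_subring_mult_right_subset_imp_eq: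
  fixes R :: "'a::division_ring set"
  assumes R: "maximal_subring R" and le: "(\<lambda>r. r * l) ` R \<subseteq> (*) l ` R"
  shows "(*) l ` R = (\<lambda>r. r * l) ` R"
proof (cases "l = 0")
  case True
  then show ?thesis by auto
next
  case False
  have left: "(*) l ` R = (\<lambda>r. r * l) ` conjugate l ` R"
    using False by (simp add: image_image mult_left_eq_mult_right_conjugate)
  have "inj (\<lambda>r. r * l)"
    using False by (simp add: inj_def)
  then have "R \<subseteq> conjugate l ` R"
    using le left by (simp add: inj_image_subset_iff)
  then have "conjugate l ` R = R"
    using R False by (simp add: maximal_subring_conjugate_eq)
  then show ?thesis
    using left by simp
qed

theorem lemma2p1:
  fixes R :: "'a::division_ring set" and l :: 'a
  assumes "maximal_subring R"
  shows "(((*) l) ` R \<subseteq> (\<lambda>r. r * l) ` R \<longleftrightarrow> (\<lambda>r. r * l) ` R \<subseteq> ((*) l) ` R) \<and>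
         ((\<lambda>r. r * l) ` R \<subseteq> ((*) l) ` R \<longleftrightarrow> ((*) l) ` R = (\<lambda>r. r * l) ` R)"
  using maximal_subring_mult_left_subset_imp_eq[OF assms]
    maximal_subring_mult_right_subset_imp_eq[OF assms]
  by blast

end
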